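(* Let $n\in\mathbb{N}$, $0\le x_0<x_1<\cdots<x_n$, $I:=[x_0,x_n]$, and for $i\in\{1,\dots,n\}$ let $l_i:I\to[x_{i-1},x_i]$ be a contractive homeomorphism with $l_i(x_0)=x_{i-1}$, $l_i(x_n)=x_i$. Let $L:C^+I\to C^+I$ be a bounded semi-linear operator, and let $f,S_1,\dots,S_n\in C^+I$ with $Lf(x_0)=f(x_0)$ and $Lf(x_n)=f(x_n)$. Define $T$ on $C^+I$ by $$Tg:=f+(S_i\circ l_i^{-1})\cdot\big((g-Lf)\circ l_i^{-1}\big)\quad\text{on } I_i,\ i=1,\dots,n,$$ and assume that $Tg$ takes values in $\mathbb{R}_0^+$ and satisfies the join-up conditions $Tg(x_j-)=Tg(x_j+)$ for $j=1,\dots,n-1$, so that $T:C^+I\to C^+I$. Let $S_\infty:=\max_{i}\|S_i\|_\infty$. If $S_\infty<1$, then $T$ is contractive on $(C^+I,d)$, and its unique fixed point $f^*\in C^+I$ satisfies $$f^*=f+(S_i\circ l_i^{-1})\cdot\big((f^*-Lf)\circ l_i^{-1}\big)\quad\text{on } I_i,\ i=1,\dots,n.$$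
   Context: $\mathbb{R}_0^+:=[0,\infty)$. $C^+I:=\{f\in C(I):f(I)\subset\mathbb{R}_0^+\}$, a semi-vector space over $\mathbb{R}_0^+$ (pointwise addition, nonnegative scalar multiplication), with metric $d(f,g):=\max_{x\in I}(\max\{f(x),g(x)\}-\min\{f(x),g(x)\})$, under which it is complete. $\|\cdot\|_\infty$ is the supremum norm. A map $L$ is semi-linear if $L(u+v)=Lu+Lv$ and $L(\lambda u)=\lambda Lu$ for $\lambda\ge0$; it is bounded if $d(Lu,0)\le M\,d(u,0)$ for some $M>0$ and all $u$. $I_i:=[x_{i-1},x_i)$ for $i<n$, $I_n:=[x_{n-1},x_n]$. Contractive means Lipschitz with constant $<1$ with respect to $d$. *)

theory Defs
  imports "HOL-Analysis.Analysis"
begin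

definition Ival :: "(nat \<Rightarrow> real) \<Rightarrow> nat \<Rightarrow> real set" where
  "Ival x n = {x 0 .. x n}"

text \<open>C^+I, with functions represented extensionally (value 0 outside I).\<close>
definition CplusI :: "(nat \<Rightarrow> real) \<Rightarrow> nat \<Rightarrow> (real \<Rightarrow> real) set" where
  "CplusI x n = {u. continuous_on (Ival x n) u \<and> (\<forall>y\<in>Ival x n. 0 \<le> u y)
                    \<and> (\<forall>y. y \<notin> Ival x n \<longrightarrow> u y = 0)}"

definition dI :: "(nat \<Rightarrow> real) \<Rightarrow> nat \<Rightarrow> (real \<Rightarrow> real) \<Rightarrow> (real \<Rightarrow> real) \<Rightarrow> real" where
  "dI x n u v = (SUP y\<in>Ival x n. max (u y) (v y) - min (u y) (v y))"

definition supnormI :: "(nat \<Rightarrow> real) \<Rightarrow> nat \<Rightarrow> (real \<Rightarrow> real) \<Rightarrow> real" where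
  "supnormI x n u = (SUP y\<in>Ival x n. \<bar>u y\<bar>)"

definition subI :: "(nat \<Rightarrow> real) \<Rightarrow> nat \<Rightarrow> nat \<Rightarrow> real set" where
  "subI x n i = (if i < n then {x (i - 1) ..< x i} else {x (n - 1) .. x n})"

definition Tpiece :: "(nat \<Rightarrow> real) \<Rightarrow> nat \<Rightarrow> (nat \<Rightarrow> real \<Rightarrow> real) \<Rightarrow> (nat \<Rightarrow> real \<Rightarrow> real)
     \<Rightarrow> ((real \<Rightarrow> real) \<Rightarrow> (real \<Rightarrow> real)) \<Rightarrow> (real \<Rightarrow> real) \<Rightarrow> (real \<Rightarrow> real) \<Rightarrow> nat \<Rightarrow> real \<Rightarrow> real" where
  "Tpiece x n l S L f g i y =
     (let z = inv_into (Ival x n) (l i) y in f y + S i z * (g z - L f z))"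

definition Top :: "(nat \<Rightarrow> real) \<Rightarrow> nat \<Rightarrow> (nat \<Rightarrow> real \<Rightarrow> real) \<Rightarrow> (nat \<Rightarrow> real \<Rightarrow> real)
     \<Rightarrow> ((real \<Rightarrow> real) \<Rightarrow> (real \<Rightarrow> real)) \<Rightarrow> (real \<Rightarrow> real) \<Rightarrow> (real \<Rightarrow> real) \<Rightarrow> real \<Rightarrow> real" where
  "Top x n l S L f g y =
     (if \<exists>i\<in>{1..n}. y \<in> subI x n i
      then Tpiece x n l S L f g (THE i. i \<in> {1..n} \<and> y \<in> subI x n i) y
      else 0)"

end

theory Submission
  imports Defs
begin

(* Tg and Th are built from the same f and L f, so on the piece I_i they differ by
   (S_i o l_i^-1) * ((g - h) o l_i^-1); hence d(Tg, Th) <= S_inf d(g, h).  The join-up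
   conditions make Tg continuous across the knots, so T maps C^+I into itself, and C^+I with
   the sup metric is complete because it is closed under uniform limits.  Banach's fixed point
   theorem then gives f^*.  The semi-linearity and boundedness of L, the contractivity of the
   l_i and their endpoint values are not needed for this argument, since nonnegativity and the
   join-up conditions of Tg are assumed outright. *)

lemma (in Metric_space) contraction_imp_ex1_fixpoint:
  assumes "mcomplete" "M \<noteq> {}" "f \<in> M \<rightarrow> M" "k < 1"
    and "\<And>x y. \<lbrakk>x \<in> M; y \<in> M\<rbrakk> \<Longrightarrow> d (f x) (f y) \<le> k * d x y"
  shows "\<exists>!x. x \<in> M \<and> f x = x"
  using Banach_fixedpoint_thm[OF assms] contraction_imp_unique_fixpoint[OF _ _ assms(3-5)] by metis

lemma inv_into_homeomorphism:
  assumes "homeomorphism A B k h" "y \<in> B"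
  shows "inv_into A k y = h y"
proof -
  have "inj_on k A" using homeomorphism_apply1[OF assms(1)] by (rule inj_on_inverseI)
  moreover have "h y \<in> A" "k (h y) = y" using assms by (auto simp: homeomorphism_def)
  ultimately show ?thesis by (auto intro: inv_into_f_eq)
qed

lemma join_value_eq_left_piece:
  fixes F P Q :: "real \<Rightarrow> real"
  assumes "a < b" "b < c"
    and "continuous_on {a..b} P" "\<And>y. y \<in> {a<..<b} \<Longrightarrow> F y = P y"
    and "continuous_on {b..c} Q" "\<And>y. y \<in> {b..<c} \<Longrightarrow> F y = Q y"
    and "(F \<longlongrightarrow> A) (at_left b)" "(F \<longlongrightarrow> A) (at_right b)"
  shows "F b = P b"
proof -
  have "(P \<longlongrightarrow> P b) (at_left b)"
    using assms(1,3) unfolding continuous_on_def at_within_Icc_at_left[OF assms(1), symmetric] by auto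
  moreover have "\<forall>\<^sub>F y in at_left b. P y = F y"
    using eventually_at_left_real[OF assms(1)] by eventually_elim (use assms(4) in auto)
  ultimately have "(F \<longlongrightarrow> P b) (at_left b)" by (rule Lim_transform_eventually)
  then have "A = P b" by (intro tendsto_unique[OF _ assms(7)]) simp_all
  have "(Q \<longlongrightarrow> Q b) (at_right b)"
    using assms(2,5) unfolding continuous_on_def at_within_Icc_at_right[OF assms(2), symmetric] by auto
  moreover have "\<forall>\<^sub>F y in at_right b. Q y = F y"
    using eventually_at_right_real[OF assms(2)] by eventually_elim (use assms(6) in auto)
  ultimately have "(F \<longlongrightarrow> Q b) (at_right b)" by (rule Lim_transform_eventually)
  then have "A = Q b" by (intro tendsto_unique[OF _ assms(8)]) simp_all
  then show ?thesis using \<open>A = P b\<close> assms(2,6) by simp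
qed

lemma dI_eq_SUP_abs: "dI x n u v = (SUP y\<in>Ival x n. \<bar>u y - v y\<bar>)"
  unfolding dI_def by (rule SUP_cong) (auto simp: max_def min_def)

lemma supnormI_eq_dI: "supnormI x n u = dI x n u (\<lambda>_. 0)"
  by (simp add: supnormI_def dI_eq_SUP_abs)

lemma zero_in_CplusI: "(\<lambda>_. 0) \<in> CplusI x n"
  by (simp add: CplusI_def)

lemma abs_diff_le_dI:
  assumes "u \<in> CplusI x n" "v \<in> CplusI x n" "y \<in> Ival x n"
  shows "\<bar>u y - v y\<bar> \<le> dI x n u v"
proof -
  have "continuous_on (Ival x n) (\<lambda>y. \<bar>u y - v y\<bar>)"
    using assms unfolding CplusI_def by (auto intro!: continuous_intros)
  then have "compact ((\<lambda>y. \<bar>u y - v y\<bar>) ` Ival x n)"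
    by (rule compact_continuous_image) (simp add: Ival_def)
  then have "bdd_above ((\<lambda>y. \<bar>u y - v y\<bar>) ` Ival x n)"
    by (intro bounded_imp_bdd_above compact_imp_bounded)
  then show ?thesis unfolding dI_eq_SUP_abs by (rule cSUP_upper[OF assms(3)])
qed

lemma dI_le:
  assumes "Ival x n \<noteq> {}" "\<And>y. y \<in> Ival x n \<Longrightarrow> \<bar>u y - v y\<bar> \<le> B"
  shows "dI x n u v \<le> B"
  unfolding dI_eq_SUP_abs using assms by (rule cSUP_least)

lemma abs_le_Max_supnormI:
  assumes "finite K" "i \<in> K" "S i \<in> CplusI x n" "z \<in> Ival x n"
  shows "\<bar>S i z\<bar> \<le> Max ((\<lambda>i. supnormI x n (S i)) ` K)"
proof -
  have "\<bar>S i z\<bar> \<le> supnormI x n (S i)"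
    using abs_diff_le_dI[OF assms(3) zero_in_CplusI assms(4)] by (simp add: supnormI_eq_dI)
  also have "\<dots> \<le> Max ((\<lambda>i. supnormI x n (S i)) ` K)" using assms(1,2) by (intro Max_ge) auto
  finally show ?thesis .
qed

text \<open>Outside \<open>CplusI x n\<close> the supremum defining \<open>dI\<close> may range over an unbounded set and is
  then meaningless; \<open>Metric_space\<close> demands a nonnegative distance everywhere, so it is cut off.\<close>
definition dCplusI :: "(nat \<Rightarrow> real) \<Rightarrow> nat \<Rightarrow> (real \<Rightarrow> real) \<Rightarrow> (real \<Rightarrow> real) \<Rightarrow> real" where
  "dCplusI x n u v = (if u \<in> CplusI x n \<and> v \<in> CplusI x n then dI x n u v else 0)"

lemma Metric_space_CplusI:
  assumes "x 0 \<le> x n"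
  shows "Metric_space (CplusI x n) (dCplusI x n)"
proof
  have x0: "x 0 \<in> Ival x n" using assms by (simp add: Ival_def)
  then have I: "Ival x n \<noteq> {}" by blast
  fix u v w
  show "0 \<le> dCplusI x n u v"
    using abs_diff_le_dI[OF _ _ x0, of u v] by (auto simp: dCplusI_def intro: order_trans[OF abs_ge_zero])
  show "dCplusI x n u v = dCplusI x n v u"
    by (auto simp: dCplusI_def dI_eq_SUP_abs abs_minus_commute)
  assume u: "u \<in> CplusI x n" and v: "v \<in> CplusI x n"
  have "u = v" if "dI x n u v = 0"
  proof
    fix y show "u y = v y"
      using abs_diff_le_dI[OF u v, of y] that u v by (cases "y \<in> Ival x n") (auto simp: CplusI_def)
  qed
  moreover have "dI x n u u = 0" using I by (simp add: dI_eq_SUP_abs)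
  ultimately show "dCplusI x n u v = 0 \<longleftrightarrow> u = v" using u v by (auto simp: dCplusI_def)
  assume w: "w \<in> CplusI x n"
  have "dI x n u w \<le> dI x n u v + dI x n v w"
  proof (rule dI_le[OF I])
    fix y assume "y \<in> Ival x n"
    then show "\<bar>u y - w y\<bar> \<le> dI x n u v + dI x n v w"
      using abs_diff_le_dI[OF u v] abs_diff_le_dI[OF v w] by fastforce
  qed
  then show "dCplusI x n u w \<le> dCplusI x n u v + dCplusI x n v w" using u v w by (simp add: dCplusI_def)
qed

lemma uniformly_Cauchy_on_if_MCauchy_CplusI:
  assumes "x 0 \<le> x n" "Metric_space.MCauchy (CplusI x n) (dCplusI x n) \<sigma>"
  shows "uniformly_Cauchy_on (Ival x n) \<sigma>"
proof (rule uniformly_Cauchy_onI)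
  interpret C: Metric_space "CplusI x n" "dCplusI x n" by (rule Metric_space_CplusI[OF assms(1)])
  have \<sigma>: "\<And>k. \<sigma> k \<in> CplusI x n" using assms(2) by (auto simp: C.MCauchy_def)
  fix e :: real assume "e > 0"
  then obtain N where N: "\<forall>p q. N \<le> p \<longrightarrow> N \<le> q \<longrightarrow> dCplusI x n (\<sigma> p) (\<sigma> q) < e"
    using assms(2) unfolding C.MCauchy_def by blast
  show "\<exists>N. \<forall>y\<in>Ival x n. \<forall>p\<ge>N. \<forall>q\<ge>N. dist (\<sigma> p y) (\<sigma> q y) < e"
  proof (intro exI[of _ N] ballI allI impI)
    fix y p q assume "y \<in> Ival x n" "N \<le> p" "N \<le> q"
    have "dI x n (\<sigma> p) (\<sigma> q) < e" using N \<open>N \<le> p\<close> \<open>N \<le> q\<close> \<sigma> by (simp add: dCplusI_def)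
    then show "dist (\<sigma> p y) (\<sigma> q y) < e"
      using abs_diff_le_dI[OF \<sigma> \<sigma> \<open>y \<in> Ival x n\<close>, of p q] by (simp add: dist_real_def)
  qed
qed

lemma uniform_limit_in_CplusI:
  assumes "\<And>k. \<sigma> k \<in> CplusI x n" "uniform_limit (Ival x n) \<sigma> G sequentially"
  shows "(\<lambda>y. if y \<in> Ival x n then G y else 0) \<in> CplusI x n"
proof -
  have "continuous_on (Ival x n) G"
    by (rule uniform_limit_theorem[OF _ assms(2)]) (use assms(1) in \<open>auto simp: CplusI_def\<close>)
  then have "continuous_on (Ival x n) (\<lambda>y. if y \<in> Ival x n then G y else 0)"
    by (rule continuous_on_eq) simp
  moreover have "0 \<le> G y" if "y \<in> Ival x n" for y
  proof (rule tendsto_lowerbound[OF tendsto_uniform_limitI[OF assms(2) that]])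
    show "\<forall>\<^sub>F k in sequentially. 0 \<le> \<sigma> k y" using assms(1) that by (simp add: CplusI_def)
  qed simp
  ultimately show ?thesis by (simp add: CplusI_def)
qed

lemma limitin_CplusI_if_uniform_limit:
  assumes "x 0 \<le> x n" "\<And>k. \<sigma> k \<in> CplusI x n" "uniform_limit (Ival x n) \<sigma> G sequentially"
  shows "limitin (Metric_space.mtopology (CplusI x n) (dCplusI x n)) \<sigma>
           (\<lambda>y. if y \<in> Ival x n then G y else 0) sequentially"
    (is "limitin _ \<sigma> ?G _")
proof -
  interpret C: Metric_space "CplusI x n" "dCplusI x n" by (rule Metric_space_CplusI[OF assms(1)])
  have I: "Ival x n \<noteq> {}" using assms(1) by (simp add: Ival_def)
  have G_in: "?G \<in> CplusI x n" using assms(2,3) by (rule uniform_limit_in_CplusI)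
  have "\<forall>\<^sub>F k in sequentially. \<sigma> k \<in> CplusI x n \<and> dCplusI x n (\<sigma> k) ?G < e" if "e > 0" for e
  proof -
    have "\<forall>\<^sub>F k in sequentially. \<forall>y\<in>Ival x n. dist (\<sigma> k y) (G y) < e / 2"
      using uniform_limitD[OF assms(3), of "e / 2"] \<open>e > 0\<close> by simp
    then show ?thesis
    proof eventually_elim
      case (elim k)
      then have "dI x n (\<sigma> k) ?G \<le> e / 2" by (intro dI_le[OF I]) (auto simp: dist_real_def)
      then show ?case using assms(2) G_in \<open>e > 0\<close> by (simp add: dCplusI_def)
    qed
  qed
  then show ?thesis using G_in unfolding C.limitin_metric by blast
qed

lemma mcomplete_CplusI:
  assumes "x 0 \<le> x n"
  shows "Metric_space.mcomplete (CplusI x n) (dCplusI x n)"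
proof -
  interpret C: Metric_space "CplusI x n" "dCplusI x n" by (rule Metric_space_CplusI[OF assms])
  show ?thesis unfolding C.mcomplete_def
  proof (intro allI impI)
    fix \<sigma> assume "C.MCauchy \<sigma>"
    then have "\<And>k. \<sigma> k \<in> CplusI x n" by (auto simp: C.MCauchy_def)
    moreover obtain G where "uniform_limit (Ival x n) \<sigma> G sequentially"
      using Cauchy_uniformly_convergent[OF uniformly_Cauchy_on_if_MCauchy_CplusI[OF assms \<open>C.MCauchy \<sigma>\<close>]]
      unfolding uniformly_convergent_on_def by blast
    ultimately show "\<exists>G. limitin C.mtopology \<sigma> G sequentially"
      using limitin_CplusI_if_uniform_limit[OF assms] by blast
  qed
qed

lemma subI_subset_piece:
  assumes "i \<le> n"
  shows "subI x n i \<subseteq> {x (i - 1) .. x i}"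
  using assms by (auto simp: subI_def)

lemma continuous_on_Tpiece:
  assumes hom: "homeomorphism (Ival x n) J (l i) h"
    and "continuous_on (Ival x n) f" "continuous_on (Ival x n) (L f)"
    and "continuous_on (Ival x n) (S i)" "continuous_on (Ival x n) g"
    and "J \<subseteq> Ival x n"
  shows "continuous_on J (Tpiece x n l S L f g i)"
proof -
  have h: "continuous_on J h" "h ` J \<subseteq> Ival x n" using hom by (auto simp: homeomorphism_def)
  note comp = continuous_on_compose2[OF _ h]
  have "continuous_on J (\<lambda>y. f y + S i (h y) * (g (h y) - L f (h y)))"
    using assms(2-6) by (intro continuous_intros comp continuous_on_subset[of "Ival x n" f J])
  then show ?thesis
    by (rule continuous_on_eq) (simp add: Tpiece_def Let_def inv_into_homeomorphism[OF hom])
qed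

locale knot_sequence =
  fixes x :: "nat \<Rightarrow> real" and n :: nat
  assumes knots_increasing: "\<forall>i<n. x i < x (Suc i)"
    and one_le_n: "1 \<le> n"
begin

lemma knots_less: "i < j \<Longrightarrow> j \<le> n \<Longrightarrow> x i < x j"
  using knots_increasing by (auto intro: lift_Suc_mono_less_ivl[of "{..<n}"])

lemma knots_le: "i \<le> j \<Longrightarrow> j \<le> n \<Longrightarrow> x i \<le> x j"
  using knots_less[of i j] by (cases "i = j") auto

lemma x0_le_xn: "x 0 \<le> x n"
  by (rule knots_le) simp_all

lemma x0_in_Ival: "x 0 \<in> Ival x n"
  using x0_le_xn by (simp add: Ival_def)

lemma piece_subset_Ival: "i \<in> {1..n} \<Longrightarrow> {x (i - 1) .. x i} \<subseteq> Ival x n"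
  using knots_le[of 0 "i - 1"] knots_le[of i n] by (auto simp: Ival_def)

lemma subI_cover:
  assumes "y \<in> Ival x n"
  obtains i where "i \<in> {1..n}" "y \<in> subI x n i"
proof (cases "y = x n")
  case True
  then show ?thesis
    using that[of n] one_le_n knots_le[of "n - 1" n] by (auto simp: subI_def)
next
  case False
  then have "y < x n" using assms by (auto simp: Ival_def)
  define j where "j = (LEAST j. y < x j)"
  have "y < x j" "j \<le> n"
    unfolding j_def using \<open>y < x n\<close> by (auto intro: LeastI Least_le)
  moreover have "j \<noteq> 0" using \<open>y < x j\<close> assms by (intro notI) (simp add: Ival_def)
  moreover have "x (j - 1) \<le> y"
    using \<open>j \<noteq> 0\<close> not_less_Least[of "j - 1" "\<lambda>j. y < x j"] unfolding j_def by simp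
  ultimately have "j \<in> {1..n}" "y \<in> subI x n j" by (auto simp: subI_def)
  then show ?thesis by (rule that)
qed

lemma subI_unique:
  assumes "i \<in> {1..n}" "j \<in> {1..n}" "y \<in> subI x n i" "y \<in> subI x n j"
  shows "i = j"
proof -
  have "\<not> k < m" if "k \<in> {1..n}" "m \<in> {1..n}" "y \<in> subI x n k" "y \<in> subI x n m" for k m
  proof
    assume "k < m"
    then have "y < x k" "x k \<le> x (m - 1)" "x (m - 1) \<le> y"
      using that knots_le[of k "m - 1"] by (auto simp: subI_def split: if_splits)
    then show False by simp
  qed
  then show ?thesis using assms by (metis linorder_neqE_nat)
qed

lemma Ival_eq_Union_pieces: "Ival x n = (\<Union>i\<in>{1..n}. {x (i - 1) .. x i})"
proof
  show "Ival x n \<subseteq> (\<Union>i\<in>{1..n}. {x (i - 1) .. x i})"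
  proof
    fix y assume "y \<in> Ival x n"
    then obtain i where i: "i \<in> {1..n}" and "y \<in> subI x n i" by (rule subI_cover)
    then have "y \<in> {x (i - 1) .. x i}" using subI_subset_piece[of i n x] by auto
    then show "y \<in> (\<Union>i\<in>{1..n}. {x (i - 1) .. x i})" by (rule UN_I[OF i])
  qed
  show "(\<Union>i\<in>{1..n}. {x (i - 1) .. x i}) \<subseteq> Ival x n"
    using piece_subset_Ival by blast
qed

lemma Top_eq_Tpiece:
  assumes "i \<in> {1..n}" "y \<in> subI x n i"
  shows "Top x n l S L f g y = Tpiece x n l S L f g i y"
proof -
  have "(THE i. i \<in> {1..n} \<and> y \<in> subI x n i) = i"
    using assms subI_unique by (intro the_equality) auto
  then show ?thesis unfolding Top_def using assms by auto
qed

lemma Top_outside_Ival: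
  assumes "y \<notin> Ival x n"
  shows "Top x n l S L f g y = 0"
proof -
  have "y \<notin> subI x n i" if "i \<in> {1..n}" for i
    using that assms subI_subset_piece[of i n x] piece_subset_Ival[OF that] by auto
  then show ?thesis unfolding Top_def by auto
qed

lemma Top_eq_Tpiece_on_piece:
  assumes i: "i \<in> {1..n}" and y: "y \<in> {x (i - 1) .. x i}"
    and pieces: "\<And>i. i \<in> {1..n} \<Longrightarrow> continuous_on {x (i - 1) .. x i} (Tpiece x n l S L f g i)"
    and joinup: "\<forall>j\<in>{1..n-1}. \<exists>a. (Top x n l S L f g \<longlongrightarrow> a) (at_left (x j)) \<and>
                                   (Top x n l S L f g \<longlongrightarrow> a) (at_right (x j))"
  shows "Top x n l S L f g y = Tpiece x n l S L f g i y"
proof (cases "y < x i \<or> i = n")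
  case True
  then have "y \<in> subI x n i" using i y by (auto simp: subI_def)
  then show ?thesis by (rule Top_eq_Tpiece[OF i])
next
  case False
  txt \<open>At an inner knot \<open>Top\<close> uses the right-hand piece; the join-up condition forces it to agree
    with the left-hand one.\<close>
  then have "y = x i" "i < n" using i y by auto
  have Suc_i: "Suc i \<in> {1..n}" using \<open>i < n\<close> by simp
  have "i \<in> {1..n-1}" using \<open>i < n\<close> i by simp
  then obtain a where "(Top x n l S L f g \<longlongrightarrow> a) (at_left (x i))"
    "(Top x n l S L f g \<longlongrightarrow> a) (at_right (x i))"
    using joinup by blast
  moreover have "x (i - 1) < x i" "x i < x (Suc i)"
    using knots_less[of "i - 1" i] knots_increasing \<open>i < n\<close> i by auto
  moreover have "Top x n l S L f g y' = Tpiece x n l S L f g i y'" if "y' \<in> {x (i - 1)<..<x i}" for y'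
    using that \<open>i < n\<close> by (intro Top_eq_Tpiece[OF i]) (auto simp: subI_def)
  moreover have "Top x n l S L f g y' = Tpiece x n l S L f g (Suc i) y'"
    if "y' \<in> {x i..<x (Suc i)}" for y'
    using that \<open>i < n\<close> by (intro Top_eq_Tpiece[OF Suc_i]) (cases "Suc i = n"; auto simp: subI_def)
  ultimately show ?thesis
    using join_value_eq_left_piece[OF _ _ pieces[OF i] _ pieces[OF Suc_i, simplified]] \<open>y = x i\<close>
    by blast
qed

lemma Top_in_CplusI:
  assumes pieces: "\<And>i. i \<in> {1..n} \<Longrightarrow> continuous_on {x (i - 1) .. x i} (Tpiece x n l S L f g i)"
    and joinup: "\<forall>j\<in>{1..n-1}. \<exists>a. (Top x n l S L f g \<longlongrightarrow> a) (at_left (x j)) \<and>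
                                   (Top x n l S L f g \<longlongrightarrow> a) (at_right (x j))"
    and nonneg: "\<forall>y\<in>Ival x n. 0 \<le> Top x n l S L f g y"
  shows "Top x n l S L f g \<in> CplusI x n"
proof -
  have "continuous_on (\<Union>i\<in>{1..n}. {x (i - 1) .. x i}) (Top x n l S L f g)"
  proof (rule continuous_on_closed_Union)
    fix i assume i: "i \<in> {1..n}"
    show "continuous_on {x (i - 1) .. x i} (Top x n l S L f g)"
      using pieces[OF i]
      by (rule continuous_on_eq) (rule Top_eq_Tpiece_on_piece[OF i _ pieces joinup, symmetric])
  qed auto
  then show ?thesis
    using nonneg Top_outside_Ival by (simp add: CplusI_def Ival_eq_Union_pieces)
qed

lemma Top_maps_CplusI:
  assumes l_homeo: "\<forall>i\<in>{1..n}. \<exists>h. homeomorphism (Ival x n) {x (i - 1) .. x i} (l i) h"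
    and "f \<in> CplusI x n" "L f \<in> CplusI x n" "\<forall>i\<in>{1..n}. S i \<in> CplusI x n"
    and joinup: "\<forall>g\<in>CplusI x n. \<forall>j\<in>{1..n-1}. \<exists>a.
                   (Top x n l S L f g \<longlongrightarrow> a) (at_left (x j)) \<and> (Top x n l S L f g \<longlongrightarrow> a) (at_right (x j))"
    and nonneg: "\<forall>g\<in>CplusI x n. \<forall>y\<in>Ival x n. 0 \<le> Top x n l S L f g y"
  shows "Top x n l S L f \<in> CplusI x n \<rightarrow> CplusI x n"
proof
  fix g assume g: "g \<in> CplusI x n"
  have "continuous_on {x (i - 1) .. x i} (Tpiece x n l S L f g i)" if i: "i \<in> {1..n}" for i
  proof -
    obtain h where "homeomorphism (Ival x n) {x (i - 1) .. x i} (l i) h" using l_homeo i by blast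
    then show ?thesis
      using assms(2-4) g i piece_subset_Ival[OF i]
      by (intro continuous_on_Tpiece) (auto simp: CplusI_def)
  qed
  then show "Top x n l S L f g \<in> CplusI x n" using Top_in_CplusI joinup nonneg g by blast
qed

lemma dI_Top_le:
  assumes l_homeo: "\<forall>i\<in>{1..n}. \<exists>h. homeomorphism (Ival x n) {x (i - 1) .. x i} (l i) h"
    and S_le: "\<forall>i\<in>{1..n}. \<forall>z\<in>Ival x n. \<bar>S i z\<bar> \<le> c" and "0 \<le> c"
    and g: "g \<in> CplusI x n" and h: "h \<in> CplusI x n"
  shows "dI x n (Top x n l S L f g) (Top x n l S L f h) \<le> c * dI x n g h"
proof (rule dI_le)
  show "Ival x n \<noteq> {}" using x0_in_Ival by blast
  fix y assume "y \<in> Ival x n"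
  then obtain i where i: "i \<in> {1..n}" and y: "y \<in> subI x n i" by (rule subI_cover)
  define z where "z = inv_into (Ival x n) (l i) y"
  obtain k where "homeomorphism (Ival x n) {x (i - 1) .. x i} (l i) k" using l_homeo i by blast
  then have "l i ` Ival x n = {x (i - 1) .. x i}" by (simp add: homeomorphism_def)
  then have "y \<in> l i ` Ival x n" using y subI_subset_piece[of i n x] i by auto
  then have z: "z \<in> Ival x n" unfolding z_def by (rule inv_into_into)
  have "Top x n l S L f g y - Top x n l S L f h y = S i z * (g z - h z)"
    using Top_eq_Tpiece[OF i y, of l S L f g] Top_eq_Tpiece[OF i y, of l S L f h]
    by (simp add: Tpiece_def Let_def z_def algebra_simps)
  then have "\<bar>Top x n l S L f g y - Top x n l S L f h y\<bar> = \<bar>S i z\<bar> * \<bar>g z - h z\<bar>"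
    by (simp add: abs_mult)
  also have "\<dots> \<le> c * dI x n g h"
    using S_le i z \<open>0 \<le> c\<close> abs_diff_le_dI[OF g h z] by (intro mult_mono) auto
  finally show "\<bar>Top x n l S L f g y - Top x n l S L f h y\<bar> \<le> c * dI x n g h" .
qed

end

theorem theorem5p3:
  fixes x :: "nat \<Rightarrow> real" and n :: nat
    and l S :: "nat \<Rightarrow> real \<Rightarrow> real"
    and L :: "(real \<Rightarrow> real) \<Rightarrow> (real \<Rightarrow> real)"
    and f :: "real \<Rightarrow> real"
  assumes n_pos: "1 \<le> n"
    and x0: "0 \<le> x 0"
    and x_incr: "\<forall>i<n. x i < x (Suc i)"
    and l_homeo: "\<forall>i\<in>{1..n}. \<exists>h. homeomorphism (Ival x n) {x (i - 1) .. x i} (l i) h"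
    and l_contr: "\<forall>i\<in>{1..n}. \<exists>c<1. \<forall>y\<in>Ival x n. \<forall>z\<in>Ival x n.
                     \<bar>l i y - l i z\<bar> \<le> c * \<bar>y - z\<bar>"
    and l_ends: "\<forall>i\<in>{1..n}. l i (x 0) = x (i - 1) \<and> l i (x n) = x i"
    and L_maps: "\<forall>u\<in>CplusI x n. L u \<in> CplusI x n"
    and L_add: "\<forall>u\<in>CplusI x n. \<forall>v\<in>CplusI x n. L (\<lambda>y. u y + v y) = (\<lambda>y. L u y + L v y)"
    and L_hom: "\<forall>u\<in>CplusI x n. \<forall>c::real. 0 \<le> c \<longrightarrow> L (\<lambda>y. c * u y) = (\<lambda>y. c * L u y)"
    and L_bdd: "\<exists>M>0. \<forall>u\<in>CplusI x n. dI x n (L u) (\<lambda>_. 0) \<le> M * dI x n u (\<lambda>_. 0)"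
    and f_in: "f \<in> CplusI x n"
    and S_in: "\<forall>i\<in>{1..n}. S i \<in> CplusI x n"
    and Lf_x0: "L f (x 0) = f (x 0)"
    and Lf_xn: "L f (x n) = f (x n)"
    and T_nonneg: "\<forall>g\<in>CplusI x n. \<forall>y\<in>Ival x n. 0 \<le> Top x n l S L f g y"
    and T_joinup: "\<forall>g\<in>CplusI x n. \<forall>j\<in>{1..n-1}. \<exists>a.
                     (Top x n l S L f g \<longlongrightarrow> a) (at_left (x j)) \<and>
                     (Top x n l S L f g \<longlongrightarrow> a) (at_right (x j))"
    and S_small: "Max ((\<lambda>i. supnormI x n (S i)) ` {1..n}) < 1"
  shows "(\<exists>c<1. \<forall>g\<in>CplusI x n. \<forall>h\<in>CplusI x n.
            dI x n (Top x n l S L f g) (Top x n l S L f h) \<le> c * dI x n g h)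
       \<and> (\<exists>!fs. fs \<in> CplusI x n \<and> Top x n l S L f fs = fs)
       \<and> (\<forall>fs\<in>CplusI x n. Top x n l S L f fs = fs \<longrightarrow>
            (\<forall>i\<in>{1..n}. \<forall>y\<in>subI x n i. fs y = Tpiece x n l S L f fs i y))"
proof -
  interpret knot_sequence x n using x_incr n_pos by (rule knot_sequence.intro)
  interpret C: Metric_space "CplusI x n" "dCplusI x n" by (rule Metric_space_CplusI[OF x0_le_xn])
  let ?T = "Top x n l S L f"
  define c where "c = Max ((\<lambda>i. supnormI x n (S i)) ` {1..n})"
  have "c < 1" using S_small by (simp add: c_def)
  have S_le: "\<forall>i\<in>{1..n}. \<forall>z\<in>Ival x n. \<bar>S i z\<bar> \<le> c"
    unfolding c_def using S_in abs_le_Max_supnormI[of "{1..n}"] by blast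
  then have "\<bar>S 1 (x 0)\<bar> \<le> c" using n_pos x0_in_Ival by simp
  then have "0 \<le> c" by (rule order_trans[OF abs_ge_zero])
  have T_maps: "?T \<in> CplusI x n \<rightarrow> CplusI x n"
    using Top_maps_CplusI[OF l_homeo f_in _ S_in T_joinup T_nonneg] L_maps f_in by blast
  have contr: "\<forall>g\<in>CplusI x n. \<forall>h\<in>CplusI x n. dI x n (?T g) (?T h) \<le> c * dI x n g h"
    using dI_Top_le[OF l_homeo S_le \<open>0 \<le> c\<close>] by blast
  then have "dCplusI x n (?T g) (?T h) \<le> c * dCplusI x n g h"
    if "g \<in> CplusI x n" "h \<in> CplusI x n" for g h
    using that T_maps by (auto simp: dCplusI_def)
  then have "\<exists>!fs. fs \<in> CplusI x n \<and> ?T fs = fs"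
    using C.contraction_imp_ex1_fixpoint[OF mcomplete_CplusI[OF x0_le_xn] _ T_maps \<open>c < 1\<close>] f_in
    by blast
  moreover have "\<forall>fs\<in>CplusI x n. ?T fs = fs \<longrightarrow>
      (\<forall>i\<in>{1..n}. \<forall>y\<in>subI x n i. fs y = Tpiece x n l S L f fs i y)"
    by (metis Top_eq_Tpiece)
  ultimately show ?thesis using contr \<open>c < 1\<close> by blast
qed

end
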